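(* Let $n\ge q\ge 1$ and let $\mathcal{G}$ be a requirements graph on the $n$ factors $F_1,\dots,F_n$. There exists a blocked $2^n$ factorial in blocks of size $2^q$ from which all $n$ main effects and all two-factor interactions corresponding to edges of $\mathcal{G}$ are estimable if and only if the chromatic number of $\mathcal{G}$ is at most $2^q-1$.
   Context: A blocked $2^n$ factorial in blocks of size $2^q$ is specified by a $q\times n$ generator matrix $X$ over $\mathrm{GF}(2)$ of rank $q$: the principal block is the row space of $X$ and the other blocks are its cosets in $\mathrm{GF}(2)^n$. An effect of a set $S$ of factors, with contrast $(-1)^{\sum_{j\in S}x_j}$, is estimable iff its contrast sums to zero over every block. A requirements graph is a simple graph with vertex set $\{F_1,\dots,F_n\}$ and an edge $F_iF_j$ whenever the interaction $F_iF_j$ is required to be estimable. *)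

theory Defs
  imports Main
begin

text \<open>Vectors of GF(2)^n are modelled as functions nat => bool supported on {..<n};
  True = 1, False = 0; addition is pointwise exclusive or.\<close>

definition gf2_space :: "nat \<Rightarrow> (nat \<Rightarrow> bool) set" where
  "gf2_space n = {x. \<forall>j. n \<le> j \<longrightarrow> \<not> x j}"

definition vadd :: "(nat \<Rightarrow> bool) \<Rightarrow> (nat \<Rightarrow> bool) \<Rightarrow> nat \<Rightarrow> bool" where
  "vadd x y = (\<lambda>j. x j \<noteq> y j)"

text \<open>A q x n matrix X over GF(2): row i is X i (for i < q), entry X i j.
  GF(2)-sum of the rows indexed by T.\<close>

definition row_sum :: "(nat \<Rightarrow> nat \<Rightarrow> bool) \<Rightarrow> nat set \<Rightarrow> nat \<Rightarrow> bool" where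
  "row_sum X T = (\<lambda>j. odd (card {i\<in>T. X i j}))"

definition row_space :: "nat \<Rightarrow> (nat \<Rightarrow> nat \<Rightarrow> bool) \<Rightarrow> (nat \<Rightarrow> bool) set" where
  "row_space q X = {row_sum X T | T. T \<subseteq> {..<q}}"

definition has_rank_q :: "nat \<Rightarrow> (nat \<Rightarrow> nat \<Rightarrow> bool) \<Rightarrow> bool" where
  "has_rank_q q X \<longleftrightarrow> (\<forall>T. T \<subseteq> {..<q} \<longrightarrow> (\<forall>j. \<not> row_sum X T j) \<longrightarrow> T = {})"

text \<open>A blocked 2^n factorial in blocks of size 2^q: a q x n generator matrix over GF(2) of rank q.\<close>

definition blocked_design :: "nat \<Rightarrow> nat \<Rightarrow> (nat \<Rightarrow> nat \<Rightarrow> bool) \<Rightarrow> bool" where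
  "blocked_design n q X \<longleftrightarrow> (\<forall>i<q. X i \<in> gf2_space n) \<and> has_rank_q q X"

definition block :: "nat \<Rightarrow> (nat \<Rightarrow> nat \<Rightarrow> bool) \<Rightarrow> (nat \<Rightarrow> bool) \<Rightarrow> (nat \<Rightarrow> bool) set" where
  "block q X c = (\<lambda>r. vadd c r) ` row_space q X"

definition contrast :: "nat set \<Rightarrow> (nat \<Rightarrow> bool) \<Rightarrow> int" where
  "contrast S x = (-1) ^ card {j\<in>S. x j}"

definition estimable :: "nat \<Rightarrow> nat \<Rightarrow> (nat \<Rightarrow> nat \<Rightarrow> bool) \<Rightarrow> nat set \<Rightarrow> bool" where
  "estimable n q X S \<longleftrightarrow> (\<forall>c\<in>gf2_space n. (\<Sum>x\<in>block q X c. contrast S x) = 0)"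

text \<open>Simple graph on vertices {..<n} (factor F_(i+1) is vertex i).\<close>

definition requirements_graph :: "nat \<Rightarrow> (nat \<Rightarrow> nat \<Rightarrow> bool) \<Rightarrow> bool" where
  "requirements_graph n E \<longleftrightarrow> (\<forall>i j. E i j \<longrightarrow> i < n \<and> j < n \<and> i \<noteq> j \<and> E j i)"

definition colorable :: "nat \<Rightarrow> (nat \<Rightarrow> nat \<Rightarrow> bool) \<Rightarrow> nat \<Rightarrow> bool" where
  "colorable n E k \<longleftrightarrow> (\<exists>f::nat \<Rightarrow> nat. (\<forall>i<n. f i < k) \<and> (\<forall>i<n. \<forall>j<n. E i j \<longrightarrow> f i \<noteq> f j))"

definition chromatic_number :: "nat \<Rightarrow> (nat \<Rightarrow> nat \<Rightarrow> bool) \<Rightarrow> nat" where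
  "chromatic_number n E = (LEAST k. colorable n E k)"

end

theory Submission
  imports Defs
begin

text \<open>Let c_j \<in> GF(2)^q be column j of the generator matrix. An effect S is estimable iff some
  r in the principal block has odd weight on S: translation by r maps each block onto itself and
  flips the sign of the contrast, whereas otherwise the contrast is constantly 1 on the principal
  block. Hence the main effect F_i is estimable iff c_i \<noteq> 0, and the interaction F_iF_j iff
  c_i \<noteq> c_j; so a design as required is the same as a proper colouring of the requirements graph
  by the 2^q - 1 nonzero vectors of GF(2)^q whose colours span GF(2)^q. Any proper colouring with
  these colours can be recoloured, one vertex at a time, until all q unit vectors occur, since
  q \<le> n.\<close>

lemma odd_card_sym_diff:
  assumes "finite A" "finite B"
  shows "odd (card ((A - B) \<union> (B - A))) \<longleftrightarrow> odd (card A) \<noteq> odd (card B)"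
proof -
  have "card ((A - B) \<union> (B - A)) = card (A - B) + card (B - A)"
    using assms by (intro card_Un_disjoint) auto
  moreover have "card (A - B) = card A - card (A \<inter> B)" "card (B - A) = card B - card (A \<inter> B)"
    using assms by (auto simp: card_Diff_subset_Int Int_commute)
  moreover have "card (A \<inter> B) \<le> card A" "card (A \<inter> B) \<le> card B"
    using assms by (auto intro: card_mono)
  ultimately show ?thesis by presburger
qed

lemma odd_card_filter_singleton: "odd (card {k\<in>{i}. P k}) \<longleftrightarrow> P i"
proof -
  have "{k\<in>{i}. P k} = (if P i then {i} else {})" by auto
  then show ?thesis by simp
qed

lemma odd_card_filter_pair:
  assumes "i \<noteq> j"
  shows "odd (card {k\<in>{i, j}. P k}) \<longleftrightarrow> P i \<noteq> P j"
proof -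
  have "{k\<in>{i, j}. P k} = (if P i then {i} else {}) \<union> (if P j then {j} else {})" by auto
  then show ?thesis using assms by simp
qed

lemma row_sum_singleton: "row_sum X {t} j = X t j"
  using odd_card_filter_singleton[of t "\<lambda>i. X i j"] by (simp add: row_sum_def)

lemma vadd_row_sum:
  assumes "finite T" "finite U"
  shows "vadd (row_sum X T) (row_sum X U) = row_sum X ((T - U) \<union> (U - T))"
proof
  fix j
  have "{i\<in>(T - U) \<union> (U - T). X i j} =
      ({i\<in>T. X i j} - {i\<in>U. X i j}) \<union> ({i\<in>U. X i j} - {i\<in>T. X i j})" by auto
  then show "vadd (row_sum X T) (row_sum X U) j = row_sum X ((T - U) \<union> (U - T)) j"
    using assms by (simp add: vadd_def row_sum_def odd_card_sym_diff)
qed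

lemma vadd_row_space:
  assumes "r \<in> row_space q X" "s \<in> row_space q X"
  shows "vadd r s \<in> row_space q X"
proof -
  obtain T U where "T \<subseteq> {..<q}" "U \<subseteq> {..<q}" "r = row_sum X T" "s = row_sum X U"
    using assms by (auto simp: row_space_def)
  moreover have "finite T" "finite U" using calculation by (auto intro: finite_subset)
  ultimately show ?thesis using vadd_row_sum[of T U X] unfolding row_space_def by blast
qed

lemma contrast_vadd:
  assumes "finite S" "odd (card {j\<in>S. r j})"
  shows "contrast S (vadd x r) = - contrast S x"
proof -
  have "{j\<in>S. vadd x r j} = ({j\<in>S. x j} - {j\<in>S. r j}) \<union> ({j\<in>S. r j} - {j\<in>S. x j})"
    by (auto simp: vadd_def)
  then have "odd (card {j\<in>S. vadd x r j}) \<longleftrightarrow> even (card {j\<in>S. x j})"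
    using assms by (simp add: odd_card_sym_diff)
  then show ?thesis unfolding contrast_def by (simp add: minus_one_power_iff)
qed

lemma estimable_if_odd_on_row_space:
  assumes "finite S" "r0 \<in> row_space q X" "odd (card {j\<in>S. r0 j})"
  shows "estimable n q X S"
  unfolding estimable_def
proof
  fix c
  let ?B = "block q X c" and ?t = "\<lambda>x. vadd x r0"
  have "?t x \<in> ?B" if x: "x \<in> ?B" for x
  proof -
    obtain r where r: "r \<in> row_space q X" "x = vadd c r" using x unfolding block_def by blast
    then have "?t x = vadd c (vadd r r0)" by (auto simp: vadd_def)
    then show ?thesis using vadd_row_space[OF r(1) assms(2)] by (auto simp: block_def)
  qed
  moreover have "?t (?t x) = x" for x by (auto simp: vadd_def)
  ultimately have "bij_betw ?t ?B ?B" by (intro bij_betw_byWitness[where f' = ?t]) auto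
  then have "(\<Sum>x\<in>?B. contrast S x) = (\<Sum>x\<in>?B. contrast S (?t x))"
    using sum.reindex_bij_betw[of ?t ?B ?B "contrast S"] by simp
  also have "\<dots> = - (\<Sum>x\<in>?B. contrast S x)"
    using contrast_vadd[OF assms(1,3)] by (simp add: sum_negf)
  finally show "(\<Sum>x\<in>?B. contrast S x) = 0" by simp
qed

lemma block_zero: "block q X (\<lambda>_. False) = row_space q X"
proof -
  have "vadd (\<lambda>_. False) r = r" for r by (auto simp: vadd_def)
  then show ?thesis by (simp add: block_def)
qed

lemma odd_on_row_space_if_estimable:
  assumes "estimable n q X S"
  shows "\<exists>r\<in>row_space q X. odd (card {j\<in>S. r j})"
proof (rule ccontr)
  assume "\<not> ?thesis"
  then have "(\<Sum>x\<in>row_space q X. contrast S x) = int (card (row_space q X))"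
    by (simp add: contrast_def)
  moreover have "row_space q X \<noteq> {}" "finite (row_space q X)"
    by (auto simp: row_space_def)
  moreover have "(\<lambda>_. False) \<in> gf2_space n" by (simp add: gf2_space_def)
  ultimately show False using assms block_zero unfolding estimable_def by force
qed

lemma estimable_iff_odd_on_row_space:
  "finite S \<Longrightarrow> estimable n q X S \<longleftrightarrow> (\<exists>r\<in>row_space q X. odd (card {j\<in>S. r j}))"
  using estimable_if_odd_on_row_space odd_on_row_space_if_estimable by blast

definition column :: "nat \<Rightarrow> (nat \<Rightarrow> nat \<Rightarrow> bool) \<Rightarrow> nat \<Rightarrow> nat \<Rightarrow> bool" where
  "column q X j = (\<lambda>t. t < q \<and> X t j)"

lemma column_in_gf2_space: "column q X j \<in> gf2_space q"
  by (simp add: column_def gf2_space_def)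

lemma row_sum_eq_on_equal_columns:
  assumes "T \<subseteq> {..<q}" "column q X i = column q X j"
  shows "row_sum X T i = row_sum X T j"
proof -
  have "{t\<in>T. X t i} = {t\<in>T. X t j}"
    using assms by (auto simp: column_def fun_eq_iff)
  then show ?thesis by (simp add: row_sum_def)
qed

lemma estimable_singleton_iff: "estimable n q X {i} \<longleftrightarrow> column q X i \<noteq> (\<lambda>_. False)"
proof -
  have "(\<exists>r\<in>row_space q X. r i) \<longleftrightarrow> (\<exists>t<q. X t i)"
  proof
    assume "\<exists>r\<in>row_space q X. r i"
    then obtain T where "T \<subseteq> {..<q}" "odd (card {t\<in>T. X t i})"
      by (auto simp: row_space_def row_sum_def)
    moreover from this(2) have "{t\<in>T. X t i} \<noteq> {}" by (intro notI) simp
    ultimately show "\<exists>t<q. X t i" by blast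
  next
    assume "\<exists>t<q. X t i"
    then obtain t where "t < q" "X t i" by blast
    then have "row_sum X {t} \<in> row_space q X" "row_sum X {t} i"
      by (auto simp: row_space_def row_sum_singleton)
    then show "\<exists>r\<in>row_space q X. r i" by blast
  qed
  moreover have "finite {i}" by simp
  ultimately show ?thesis
    unfolding estimable_iff_odd_on_row_space[OF \<open>finite {i}\<close>] odd_card_filter_singleton
    by (simp add: column_def fun_eq_iff)
qed

lemma estimable_pair_iff:
  assumes "i \<noteq> j"
  shows "estimable n q X {i, j} \<longleftrightarrow> column q X i \<noteq> column q X j"
proof -
  have "(\<exists>r\<in>row_space q X. r i \<noteq> r j) \<longleftrightarrow> column q X i \<noteq> column q X j"
  proof
    assume "\<exists>r\<in>row_space q X. r i \<noteq> r j"
    then obtain T where "T \<subseteq> {..<q}" "row_sum X T i \<noteq> row_sum X T j"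
      by (auto simp: row_space_def)
    then show "column q X i \<noteq> column q X j" using row_sum_eq_on_equal_columns by blast
  next
    assume "column q X i \<noteq> column q X j"
    then obtain t where "t < q" "X t i \<noteq> X t j" by (auto simp: column_def fun_eq_iff)
    then have "row_sum X {t} \<in> row_space q X" "row_sum X {t} i \<noteq> row_sum X {t} j"
      by (auto simp: row_space_def row_sum_singleton)
    then show "\<exists>r\<in>row_space q X. r i \<noteq> r j" by blast
  qed
  moreover have "finite {i, j}" by simp
  ultimately show ?thesis
    unfolding estimable_iff_odd_on_row_space[OF \<open>finite {i, j}\<close>] odd_card_filter_pair[OF assms] by blast
qed

definition matrix_of_columns :: "nat \<Rightarrow> (nat \<Rightarrow> nat \<Rightarrow> bool) \<Rightarrow> nat \<Rightarrow> nat \<Rightarrow> bool" where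
  "matrix_of_columns n v = (\<lambda>t j. j < n \<and> v j t)"

lemma column_matrix_of_columns:
  assumes "j < n" "v j \<in> gf2_space q"
  shows "column q (matrix_of_columns n v) j = v j"
  using assms by (auto simp: column_def matrix_of_columns_def gf2_space_def fun_eq_iff not_le)

definition unit_vectors :: "nat \<Rightarrow> (nat \<Rightarrow> bool) set" where
  "unit_vectors q = (\<lambda>t s. s = t) ` {..<q}"

text \<open>For t in T, the column e_t makes the sum of the rows in T nonzero.\<close>

lemma blocked_design_matrix_of_columns:
  assumes "\<forall>j<n. v j \<in> gf2_space q" "unit_vectors q \<subseteq> v ` {..<n}"
  shows "blocked_design n q (matrix_of_columns n v)"
  unfolding blocked_design_def has_rank_q_def
proof (intro conjI allI impI)
  fix i
  show "matrix_of_columns n v i \<in> gf2_space n"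
    by (simp add: matrix_of_columns_def gf2_space_def)
next
  fix T assume T: "T \<subseteq> {..<q}" and zero: "\<forall>j. \<not> row_sum (matrix_of_columns n v) T j"
  show "T = {}"
  proof (rule ccontr)
    assume "T \<noteq> {}"
    then obtain t where t: "t \<in> T" by blast
    then have "(\<lambda>s. s = t) \<in> v ` {..<n}" using T assms(2) by (auto simp: unit_vectors_def)
    then obtain j where j: "j < n" "v j = (\<lambda>s. s = t)" by auto
    then have "{i\<in>T. matrix_of_columns n v i j} = {t}"
      using t by (auto simp: matrix_of_columns_def)
    then have "row_sum (matrix_of_columns n v) T j" by (simp add: row_sum_def)
    then show False using zero by blast
  qed
qed

lemma gf2_space_eq_image_Pow: "gf2_space q = (\<lambda>A j. j \<in> A) ` Pow {..<q}"
proof -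
  have "x \<in> (\<lambda>A j. j \<in> A) ` Pow {..<q}" if "x \<in> gf2_space q" for x
  proof
    show "x = (\<lambda>j. j \<in> {j. x j})" by simp
    show "{j. x j} \<in> Pow {..<q}" using that by (auto simp: gf2_space_def not_le)
  qed
  then show ?thesis by (auto simp: gf2_space_def)
qed

lemma finite_gf2_space: "finite (gf2_space q)"
  by (simp add: gf2_space_eq_image_Pow)

lemma card_gf2_space: "card (gf2_space q) = 2 ^ q"
proof -
  have "inj_on (\<lambda>A j. j \<in> A) (Pow {..<q})"
    by (auto simp: inj_on_def fun_eq_iff)
  then show ?thesis by (simp add: gf2_space_eq_image_Pow card_image card_Pow)
qed

definition nonzero_vectors :: "nat \<Rightarrow> (nat \<Rightarrow> bool) set" where
  "nonzero_vectors q = gf2_space q - {\<lambda>_. False}"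

lemma card_nonzero_vectors: "card (nonzero_vectors q) = 2 ^ q - 1"
proof -
  have "(\<lambda>_. False) \<in> gf2_space q" by (simp add: gf2_space_def)
  then show ?thesis
    by (simp add: nonzero_vectors_def card_Diff_singleton finite_gf2_space card_gf2_space)
qed

lemma finite_nonzero_vectors: "finite (nonzero_vectors q)"
  by (simp add: nonzero_vectors_def finite_gf2_space)

lemma unit_vectors_subset_nonzero_vectors: "unit_vectors q \<subseteq> nonzero_vectors q"
  by (auto simp: unit_vectors_def nonzero_vectors_def gf2_space_def fun_eq_iff)

lemma card_unit_vectors: "card (unit_vectors q) = q"
proof -
  have "inj_on (\<lambda>t s. s = t) {..<q}" by (auto simp: inj_on_def fun_eq_iff)
  then show ?thesis by (simp add: unit_vectors_def card_image)
qed

definition proper_coloring :: "'a set \<Rightarrow> ('a \<Rightarrow> 'a \<Rightarrow> bool) \<Rightarrow> 'c set \<Rightarrow> ('a \<Rightarrow> 'c) \<Rightarrow> bool" where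
  "proper_coloring V E C g \<longleftrightarrow> g ` V \<subseteq> C \<and> (\<forall>i\<in>V. \<forall>j\<in>V. E i j \<longrightarrow> g i \<noteq> g j)"

lemma proper_coloring_cong:
  "(\<And>i. i \<in> V \<Longrightarrow> g i = h i) \<Longrightarrow> proper_coloring V E C g \<longleftrightarrow> proper_coloring V E C h"
  by (simp add: proper_coloring_def image_def)

lemma proper_coloring_recolor:
  assumes "proper_coloring V E C g" "d \<in> C" "d \<notin> g ` V"
  shows "proper_coloring V E C (g(a := d))"
  using assms by (auto simp: proper_coloring_def)

lemma recolorable_vertex_exists:
  assumes "finite V" "finite D" "card D \<le> card V" "d \<in> D - g ` V"
  obtains a where "a \<in> V" "g a \<notin> D \<or> (\<exists>b\<in>V. b \<noteq> a \<and> g b = g a)"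
proof (rule ccontr)
  assume "\<not> thesis"
  then have own_colour: "\<forall>a\<in>V. g a \<in> D \<and> (\<forall>b\<in>V. g b = g a \<longrightarrow> b = a)" using that by blast
  then have "inj_on g V" by (auto simp: inj_on_def)
  moreover have "g ` V \<subseteq> D - {d}" using own_colour assms(4) by auto
  ultimately have "card V \<le> card (D - {d})" using assms(2) by (metis card_image card_mono finite_Diff)
  moreover have "card D > 0" using assms(2,4) card_gt_0_iff by blast
  ultimately show False using assms by (simp add: card_Diff_singleton)
qed

text \<open>Among proper colourings, one using the most colours of D uses all of them.\<close>

lemma proper_coloring_covering:
  assumes "finite V" "finite D" "D \<subseteq> C" "card D \<le> card V" "proper_coloring V E C g0"
  obtains g where "proper_coloring V E C g" "D \<subseteq> g ` V"
proof -
  have "card (D \<inter> h ` V) < Suc (card D)" for h :: "'a \<Rightarrow> 'b"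
    using assms(2) by (simp add: card_mono le_imp_less_Suc)
  then obtain g where g: "proper_coloring V E C g"
    and max: "\<And>h. proper_coloring V E C h \<Longrightarrow> card (D \<inter> h ` V) \<le> card (D \<inter> g ` V)"
    using ex_has_greatest_nat[of "proper_coloring V E C" g0 "\<lambda>h. card (D \<inter> h ` V)"] assms(5)
    by blast
  have "d \<in> g ` V" if d: "d \<in> D" for d
  proof (rule ccontr)
    assume unused: "d \<notin> g ` V"
    obtain a where a: "a \<in> V" "g a \<notin> D \<or> (\<exists>b\<in>V. b \<noteq> a \<and> g b = g a)"
      using recolorable_vertex_exists[OF assms(1,2,4)] d unused by blast
    let ?h = "g(a := d)"
    have "proper_coloring V E C ?h"
      using proper_coloring_recolor[OF g _ unused] d assms(3) by blast
    moreover have "insert d (D \<inter> g ` V) \<subseteq> D \<inter> ?h ` V"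
    proof -
      have "g j \<in> ?h ` V" if j: "j \<in> V" "g j \<in> D" for j
      proof (cases "j = a")
        case True
        then obtain b where "b \<in> V" "b \<noteq> a" "g b = g j" using a j by blast
        then show ?thesis by (metis fun_upd_other image_eqI)
      next
        case False
        then show ?thesis using j by (metis fun_upd_other image_eqI)
      qed
      then show ?thesis using a d by auto
    qed
    then have "card (insert d (D \<inter> g ` V)) \<le> card (D \<inter> ?h ` V)"
      using assms(2) by (intro card_mono) auto
    then have "card (D \<inter> g ` V) < card (D \<inter> ?h ` V)"
      using unused assms(2) by simp
    ultimately show False using max by (meson leD)
  qed
  then show ?thesis using g that by blast
qed

lemma colorable_iff_proper_coloring:
  assumes "finite C"
  shows "colorable n E (card C) \<longleftrightarrow> (\<exists>g. proper_coloring {..<n} E C g)"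
proof
  assume "colorable n E (card C)"
  then obtain f where f: "\<forall>i<n. f i < card C" "\<forall>i<n. \<forall>j<n. E i j \<longrightarrow> f i \<noteq> f j"
    by (auto simp: colorable_def)
  obtain h where h: "bij_betw h {0..<card C} C" using ex_bij_betw_nat_finite[OF assms] by blast
  have "proper_coloring {..<n} E C (h \<circ> f)"
    using f bij_betwE[OF h] inj_on_contraD[OF bij_betw_imp_inj_on[OF h]]
    by (auto simp: proper_coloring_def)
  then show "\<exists>g. proper_coloring {..<n} E C g" by blast
next
  assume "\<exists>g. proper_coloring {..<n} E C g"
  then obtain g where g: "proper_coloring {..<n} E C g" by blast
  obtain h where h: "bij_betw h C {0..<card C}" using ex_bij_betw_finite_nat[OF assms] by blast
  have "\<forall>i<n. h (g i) < card C" "\<forall>i<n. \<forall>j<n. E i j \<longrightarrow> h (g i) \<noteq> h (g j)"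
    using g bij_betwE[OF h] inj_on_contraD[OF bij_betw_imp_inj_on[OF h]]
    by (auto simp: proper_coloring_def image_subset_iff)
  then show "colorable n E (card C)" by (auto simp: colorable_def)
qed

lemma colorable_mono: "colorable n E k \<Longrightarrow> k \<le> m \<Longrightarrow> colorable n E m"
  by (auto simp: colorable_def intro: order_less_le_trans)

lemma chromatic_number_le_iff:
  assumes "colorable n E m"
  shows "chromatic_number n E \<le> k \<longleftrightarrow> colorable n E k"
proof
  assume "chromatic_number n E \<le> k"
  moreover have "colorable n E (chromatic_number n E)"
    unfolding chromatic_number_def using assms by (rule LeastI)
  ultimately show "colorable n E k" by (rule colorable_mono[rotated])
qed (simp add: chromatic_number_def Least_le)

lemma requirements_graph_loopless: "requirements_graph n E \<Longrightarrow> E i j \<Longrightarrow> i \<noteq> j"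
  by (simp add: requirements_graph_def)

lemma colorable_requirements_graph: "requirements_graph n E \<Longrightarrow> colorable n E n"
  unfolding colorable_def by (rule exI[of _ id]) (auto dest: requirements_graph_loopless)

lemma estimable_effects_iff_proper_coloring:
  assumes "requirements_graph n E"
  shows "(\<forall>i<n. estimable n q X {i}) \<and> (\<forall>i<n. \<forall>j<n. E i j \<longrightarrow> estimable n q X {i, j})
    \<longleftrightarrow> proper_coloring {..<n} E (nonzero_vectors q) (column q X)"
  using column_in_gf2_space requirements_graph_loopless[OF assms]
  by (auto simp: proper_coloring_def nonzero_vectors_def estimable_singleton_iff
      estimable_pair_iff)

lemma blocked_design_of_proper_coloring:
  assumes "q \<le> n" "proper_coloring {..<n} E (nonzero_vectors q) v0"
  obtains X where "blocked_design n q X" "proper_coloring {..<n} E (nonzero_vectors q) (column q X)"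
proof -
  have "finite (unit_vectors q)"
    using unit_vectors_subset_nonzero_vectors finite_nonzero_vectors by (rule finite_subset)
  moreover have "card (unit_vectors q) \<le> card {..<n}" using assms(1) by (simp add: card_unit_vectors)
  ultimately obtain v where v: "proper_coloring {..<n} E (nonzero_vectors q) v"
    and units: "unit_vectors q \<subseteq> v ` {..<n}"
    using proper_coloring_covering[OF finite_lessThan _ unit_vectors_subset_nonzero_vectors _ assms(2)]
    by blast
  have v_gf2: "\<forall>j<n. v j \<in> gf2_space q"
    using v by (auto simp: proper_coloring_def nonzero_vectors_def)
  then have "proper_coloring {..<n} E (nonzero_vectors q) (column q (matrix_of_columns n v))"
    using v proper_coloring_cong[of "{..<n}" "column q (matrix_of_columns n v)" v]
      column_matrix_of_columns by simp
  with blocked_design_matrix_of_columns[OF v_gf2 units] show thesis by (rule that)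
qed

theorem lemma1:
  fixes n q :: nat and E :: "nat \<Rightarrow> nat \<Rightarrow> bool"
  assumes "1 \<le> q" and "q \<le> n" and "requirements_graph n E"
  shows "(\<exists>X. blocked_design n q X
            \<and> (\<forall>i<n. estimable n q X {i})
            \<and> (\<forall>i<n. \<forall>j<n. E i j \<longrightarrow> estimable n q X {i, j}))
         \<longleftrightarrow> chromatic_number n E \<le> 2 ^ q - 1"
proof -
  have "(\<exists>X. blocked_design n q X
            \<and> (\<forall>i<n. estimable n q X {i})
            \<and> (\<forall>i<n. \<forall>j<n. E i j \<longrightarrow> estimable n q X {i, j}))
        \<longleftrightarrow> (\<exists>X. blocked_design n q X \<and> proper_coloring {..<n} E (nonzero_vectors q) (column q X))"
    using estimable_effects_iff_proper_coloring[OF assms(3)] by blast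
  also have "\<dots> \<longleftrightarrow> (\<exists>v. proper_coloring {..<n} E (nonzero_vectors q) v)"
    using blocked_design_of_proper_coloring[OF assms(2)] by blast
  also have "\<dots> \<longleftrightarrow> colorable n E (2 ^ q - 1)"
    using colorable_iff_proper_coloring[OF finite_nonzero_vectors] card_nonzero_vectors by metis
  also have "\<dots> \<longleftrightarrow> chromatic_number n E \<le> 2 ^ q - 1"
    using chromatic_number_le_iff[OF colorable_requirements_graph[OF assms(3)]] by blast
  finally show ?thesis .
qed

end
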